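(* Let $\varphi(\bm x,\bm y,\bm w,\bm z)$ be an existential LRA formula, where $\bm x,\bm y$ have the same length, and let $\bm v_1,\bm v_2,\bm w_1,\bm w_2$ be fresh tuples of variables of the same length as $\bm w$. Then over $\mathbb{R}$ the formulas $\exists^{\mathsf{ram}}\bm x,\bm y\colon \exists\bm w\colon \varphi(\bm x,\bm y,\bm w,\bm z)$ and $\exists^{\mathsf{ram}}(\bm x,\bm v_1,\bm v_2),(\bm y,\bm w_1,\bm w_2)\colon \varphi(\bm x,\bm y,\bm v_1+\bm w_2,\bm z)\wedge \bm x\neq\bm y$ are equivalent.
   Context: LRA is the first-order theory of $\langle\mathbb{R};+,<,0,1\rangle$ (rational constants allowed). Ramsey quantifier: $\exists^{\mathsf{ram}}\bm x,\bm y\colon \psi(\bm x,\bm y,\bm z)$ holds for a valuation $\bm c$ of $\bm z$ iff there is an infinite sequence $(\bm a_i)_{i\ge1}$ of pairwise distinct real vectors with $\psi(\bm a_i,\bm a_j,\bm c)$ for all $i<j$. *)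

theory Defs
  imports Complex_Main
begin

text \<open>Linear terms over variables of type 'v, built from variables, rational
constants, addition and multiplication by rational scalars (the usual
presentation of the signature <R;+,<,0,1> with rational constants).\<close>

datatype 'v lterm = Var 'v | Const rat | Add "'v lterm" "'v lterm" | Scale rat "'v lterm"

primrec teval :: "('v \<Rightarrow> real) \<Rightarrow> 'v lterm \<Rightarrow> real" where
  "teval e (Var v) = e v"
| "teval e (Const c) = of_rat c"
| "teval e (Add s t) = teval e s + teval e t"
| "teval e (Scale c t) = of_rat c * teval e t"

primrec tvars :: "'v lterm \<Rightarrow> 'v set" where
  "tvars (Var v) = {v}"
| "tvars (Const c) = {}"
| "tvars (Add s t) = tvars s \<union> tvars t"
| "tvars (Scale c t) = tvars t"

datatype 'v qf = Less "'v lterm" "'v lterm" | Equal "'v lterm" "'v lterm"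
  | Neg "'v qf" | Conj "'v qf" "'v qf" | Disj "'v qf" "'v qf"

primrec qeval :: "('v \<Rightarrow> real) \<Rightarrow> 'v qf \<Rightarrow> bool" where
  "qeval e (Less s t) = (teval e s < teval e t)"
| "qeval e (Equal s t) = (teval e s = teval e t)"
| "qeval e (Neg f) = (\<not> qeval e f)"
| "qeval e (Conj f g) = (qeval e f \<and> qeval e g)"
| "qeval e (Disj f g) = (qeval e f \<or> qeval e g)"

primrec qvars :: "'v qf \<Rightarrow> 'v set" where
  "qvars (Less s t) = tvars s \<union> tvars t"
| "qvars (Equal s t) = tvars s \<union> tvars t"
| "qvars (Neg f) = qvars f"
| "qvars (Conj f g) = qvars f \<union> qvars g"
| "qvars (Disj f g) = qvars f \<union> qvars g"

text \<open>An existential LRA formula with free variables of type 'v: a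
quantifier-free matrix over variables 'v + nat, where the variables Inr k are
existentially quantified (a prenex block of existential quantifiers).\<close>

type_synonym 'v exfm = "('v + nat) qf"

definition exeval :: "('v \<Rightarrow> real) \<Rightarrow> 'v exfm \<Rightarrow> bool" where
  "exeval e f = (\<exists>u :: nat \<Rightarrow> real. qeval (case_sum e u) f)"

definition free_vars :: "'v exfm \<Rightarrow> 'v set" where
  "free_vars f = {v. Inl v \<in> qvars f}"

datatype var4 = VX nat | VY nat | VW nat | VZ nat

text \<open>Tuples are real lists; out-of-range components default to 0 (irrelevant
under the well-formedness hypothesis of the theorem).\<close>

definition comp :: "real list \<Rightarrow> nat \<Rightarrow> real" where
  "comp xs i = (if i < length xs then xs ! i else 0)"

fun env4 :: "real list \<Rightarrow> real list \<Rightarrow> real list \<Rightarrow> real list \<Rightarrow> var4 \<Rightarrow> real" where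
  "env4 x y w z (VX i) = comp x i"
| "env4 x y w z (VY i) = comp y i"
| "env4 x y w z (VW i) = comp w i"
| "env4 x y w z (VZ i) = comp z i"

definition wf4 :: "nat \<Rightarrow> nat \<Rightarrow> nat \<Rightarrow> var4 exfm \<Rightarrow> bool" where
  "wf4 n m p f = (free_vars f \<subseteq>
     {VX i | i. i < n} \<union> {VY i | i. i < n} \<union> {VW i | i. i < m} \<union> {VZ i | i. i < p})"

definition ram_ex :: "nat \<Rightarrow> (real list \<Rightarrow> real list \<Rightarrow> bool) \<Rightarrow> bool" where
  "ram_ex d P = (\<exists>a :: nat \<Rightarrow> real list. (\<forall>i. length (a i) = d) \<and> inj a \<and>
                   (\<forall>i j. i < j \<longrightarrow> P (a i) (a j)))"

definition vadd :: "real list \<Rightarrow> real list \<Rightarrow> real list" where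
  "vadd u v = map2 (+) u v"

end

theory Submission
  imports Defs "HOL-Library.Ramsey"
begin

text \<open>Only the passage from the first formula to the second needs an argument. Take a Ramsey
  sequence \<open>x\<^sub>i\<close> with witnesses \<open>w\<^sub>i\<^sub>j\<close>. Collect \<open>w\<^sub>i\<^sub>j\<close> and the values of the existentially quantified
  variables of \<open>\<phi>\<close> into one vector \<open>W\<close>; every atom of \<open>\<phi>\<close> then evaluates to a linear form
  \<open>A(i) + B(j) + g \<cdot> W\<close>. By Ramsey's theorem the sign pattern of the atoms under the witnesses
  is constant on an infinite subsequence, so it suffices to satisfy one fixed system of strict and
  non-strict inequalities of this shape by witnesses of the separated form \<open>W = p\<^sub>i + q\<^sub>j\<close>.
  This is done by Fourier--Motzkin elimination of one unknown at a time: by Ramsey's theorem again,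
  the tightest lower and upper bound on the eliminated unknown may be assumed to come from the same
  constraints for all pairs, and a point chosen between these two bounds is itself an affine
  combination of separated forms. Appending \<open>p\<^sub>i\<close> and \<open>q\<^sub>i\<close> to \<open>x\<^sub>i\<close> gives the second Ramsey sequence.\<close>

lemma ramsey_pairs:
  fixes P :: "nat \<Rightarrow> nat \<Rightarrow> 'c \<Rightarrow> bool"
  assumes "infinite S" and "finite C"
    and "\<And>i j. i \<in> S \<Longrightarrow> j \<in> S \<Longrightarrow> i < j \<Longrightarrow> \<exists>t\<in>C. P i j t"
  obtains Y t where "Y \<subseteq> S" "infinite Y" "t \<in> C"
    "\<And>i j. i \<in> Y \<Longrightarrow> j \<in> Y \<Longrightarrow> i < j \<Longrightarrow> P i j t"
proof -
  define col where "col i j = (SOME t. t \<in> C \<and> P i j t)" for i j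
  have col: "col i j \<in> C" "P i j (col i j)" if "i \<in> S" "j \<in> S" "i < j" for i j
    using someI_ex[OF assms(3)[OF that, unfolded Bex_def]] by (simp_all add: col_def)
  obtain idx :: "'c \<Rightarrow> nat" and k where idx: "idx ` C = {i. i < k}" "inj_on idx C"
    using finite_imp_inj_to_nat_seg[OF assms(2)] by blast
  define f where "f X = idx (col (Min X) (Max X))" for X
  have f: "f {i, j} = idx (col i j)" if "i < j" for i j
    using that by (simp add: f_def)
  have "\<forall>x\<in>S. \<forall>y\<in>S. x \<noteq> y \<longrightarrow> f {x, y} < k"
  proof (intro ballI impI)
    fix x y assume xy: "x \<in> S" "y \<in> S" "x \<noteq> y"
    show "f {x, y} < k"
    proof (cases "x < y")
      case True
      then show ?thesis using f col(1) xy idx(1) by blast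
    next
      case False
      then have "f {x, y} = idx (col y x)" using f[of y x] xy(3) by (simp add: insert_commute)
      then show ?thesis using col(1)[of y x] xy False idx(1) by fastforce
    qed
  qed
  from Ramsey2[OF assms(1) this] obtain Y t where Y: "Y \<subseteq> S" "infinite Y" "t < k"
    "\<forall>x\<in>Y. \<forall>y\<in>Y. x \<noteq> y \<longrightarrow> f {x, y} = t"
    by auto
  have "t \<in> idx ` C" using idx(1) Y(3) by simp
  then obtain c where c: "c \<in> C" "idx c = t" by blast
  show thesis
  proof (rule that[OF Y(1,2) c(1)])
    fix i j assume ij: "i \<in> Y" "j \<in> Y" "i < j"
    then have ijS: "i \<in> S" "j \<in> S" using Y(1) by auto
    have "idx (col i j) = idx c"
      using Y(4) ij f[OF ij(3)] c(2) by force
    then have "col i j = c"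
      using inj_onD[OF idx(2)] col(1)[OF ijS ij(3)] c(1) by blast
    then show "P i j c"
      using col(2)[OF ijS ij(3)] by simp
  qed
qed

text \<open>Linear forms in unknowns \<open>W\<close> whose constant term is split into a part depending only on
  the first index \<open>i\<close> of a pair and a part depending only on the second index \<open>j\<close>.\<close>

datatype sform = SForm (sf_left: "nat \<Rightarrow> real") (sf_right: "nat \<Rightarrow> real") (sf_coeff: "nat \<Rightarrow> real")

definition sf_val :: "nat \<Rightarrow> sform \<Rightarrow> nat \<Rightarrow> nat \<Rightarrow> (nat \<Rightarrow> real) \<Rightarrow> real" where
  "sf_val m f i j W = sf_left f i + sf_right f j + (\<Sum>l<m. sf_coeff f l * W l)"

definition sf_comb :: "real \<Rightarrow> sform \<Rightarrow> real \<Rightarrow> sform \<Rightarrow> real \<Rightarrow> sform" where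
  "sf_comb a f b g r = SForm (\<lambda>i. a * sf_left f i + b * sf_left g i + r)
     (\<lambda>j. a * sf_right f j + b * sf_right g j) (\<lambda>l. a * sf_coeff f l + b * sf_coeff g l)"

lemma sf_val_comb:
  "sf_val m (sf_comb a f b g r) i j W = a * sf_val m f i j W + b * sf_val m g i j W + r"
  by (simp add: sf_val_def sf_comb_def sum.distrib sum_distrib_left algebra_simps)

lemma sf_val_Suc: "sf_val (Suc m) f i j W = sf_val m f i j W + sf_coeff f m * W m"
  by (simp add: sf_val_def)

lemma sf_val_cong: "(\<And>l. l < m \<Longrightarrow> W l = W' l) \<Longrightarrow> sf_val m f i j W = sf_val m f i j W'"
  by (simp add: sf_val_def)

lemma sf_val_separated:
  "sf_val m f i j (\<lambda>l. p l + q l) =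
     (sf_left f i + (\<Sum>l<m. sf_coeff f l * p l)) + (sf_right f j + (\<Sum>l<m. sf_coeff f l * q l))"
  by (simp add: sf_val_def distrib_left sum.distrib)

definition less_if :: "bool \<Rightarrow> real \<Rightarrow> real \<Rightarrow> bool" where
  "less_if s x y \<longleftrightarrow> (if s then x < y else x \<le> y)"

lemma less_if_trans: "less_if s1 x y \<Longrightarrow> less_if s2 y z \<Longrightarrow> (s \<longrightarrow> s1 \<or> s2) \<Longrightarrow> less_if s x z"
  by (auto simp: less_if_def split: if_splits)

lemma less_if_uminus [simp]: "less_if s (- x) (- y) \<longleftrightarrow> less_if s y x"
  by (simp add: less_if_def)

datatype constr = Constr (cform: sform) (strict: bool)

definition satisfies :: "nat \<Rightarrow> constr \<Rightarrow> nat \<Rightarrow> nat \<Rightarrow> (nat \<Rightarrow> real) \<Rightarrow> bool" where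
  "satisfies m c i j W \<longleftrightarrow> less_if (strict c) (sf_val m (cform c) i j W) 0"

lemma satisfies_cong:
  "(\<And>l. l < m \<Longrightarrow> W l = W' l) \<Longrightarrow> satisfies m c i j W \<longleftrightarrow> satisfies m c i j W'"
  unfolding satisfies_def by (metis sf_val_cong)

definition bound :: "nat \<Rightarrow> constr \<Rightarrow> sform" where
  "bound m c = sf_comb (- 1 / sf_coeff (cform c) m) (cform c) 0 (cform c) 0"

lemma satisfies_Suc_lower:
  assumes "sf_coeff (cform c) m < 0"
  shows "satisfies (Suc m) c i j W \<longleftrightarrow> less_if (strict c) (sf_val m (bound m c) i j W) (W m)"
  using assms by (auto simp: satisfies_def less_if_def sf_val_Suc bound_def sf_val_comb field_simps)

lemma satisfies_Suc_upper:
  assumes "sf_coeff (cform c) m > 0"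
  shows "satisfies (Suc m) c i j W \<longleftrightarrow> less_if (strict c) (W m) (sf_val m (bound m c) i j W)"
  using assms by (auto simp: satisfies_def less_if_def sf_val_Suc bound_def sf_val_comb field_simps)

lemma satisfies_Suc_free:
  "sf_coeff (cform c) m = 0 \<Longrightarrow> satisfies (Suc m) c i j W \<longleftrightarrow> satisfies m c i j W"
  by (simp add: satisfies_def sf_val_Suc)

definition bound_le :: "nat \<Rightarrow> constr \<Rightarrow> constr \<Rightarrow> bool \<Rightarrow> constr" where
  "bound_le m c d s = Constr (sf_comb 1 (bound m c) (- 1) (bound m d) 0) s"

lemma satisfies_bound_le:
  "satisfies m (bound_le m c d s) i j W \<longleftrightarrow>
     less_if s (sf_val m (bound m c) i j W) (sf_val m (bound m d) i j W)"
  by (simp add: satisfies_def bound_le_def sf_val_comb less_if_def)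

definition lowers :: "nat \<Rightarrow> constr list \<Rightarrow> constr list" where
  "lowers m K = filter (\<lambda>c. sf_coeff (cform c) m < 0) K"

definition uppers :: "nat \<Rightarrow> constr list \<Rightarrow> constr list" where
  "uppers m K = filter (\<lambda>c. sf_coeff (cform c) m > 0) K"

text \<open>Fourier--Motzkin elimination of the variable \<open>W m\<close>, where instead of all pairs of a
  lower and an upper bound only the pairs involving a fixed lower bound \<open>k\<close> and a fixed upper
  bound \<open>l\<close> are kept; this is enough when \<open>k\<close> and \<open>l\<close> are the tightest bounds.\<close>

definition fm_elim :: "nat \<Rightarrow> constr list \<Rightarrow> constr option \<Rightarrow> constr option \<Rightarrow> constr list" where
  "fm_elim m K ko lo =
     filter (\<lambda>c. sf_coeff (cform c) m = 0) K
   @ (case ko of None \<Rightarrow> [] | Some k \<Rightarrow> map (\<lambda>c. bound_le m c k (strict c \<and> \<not> strict k)) (lowers m K))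
   @ (case lo of None \<Rightarrow> [] | Some l \<Rightarrow> map (\<lambda>c. bound_le m l c (strict c \<and> \<not> strict l)) (uppers m K))
   @ (case (ko, lo) of (Some k, Some l) \<Rightarrow> [bound_le m k l (strict k \<or> strict l)] | _ \<Rightarrow> [])"

definition fm_point :: "nat \<Rightarrow> constr option \<Rightarrow> constr option \<Rightarrow> sform" where
  "fm_point m ko lo = (case (ko, lo) of
      (Some k, Some l) \<Rightarrow> sf_comb (1/2) (bound m k) (1/2) (bound m l) 0
    | (Some k, None) \<Rightarrow> sf_comb 1 (bound m k) 0 (bound m k) 1
    | (None, Some l) \<Rightarrow> sf_comb 1 (bound m l) 0 (bound m l) (- 1)
    | (None, None) \<Rightarrow> SForm (\<lambda>_. 0) (\<lambda>_. 0) (\<lambda>_. 0))"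

definition selects :: "constr list \<Rightarrow> constr option \<Rightarrow> bool" where
  "selects L ko \<longleftrightarrow> (case ko of None \<Rightarrow> L = [] | Some k \<Rightarrow> k \<in> set L)"

definition tightest :: "(constr \<Rightarrow> real) \<Rightarrow> constr list \<Rightarrow> constr option \<Rightarrow> bool" where
  "tightest f L ko \<longleftrightarrow> selects L ko \<and>
     (\<forall>k\<in>set_option ko. \<forall>c\<in>set L. less_if (strict c \<and> \<not> strict k) (f c) (f k))"

lemma finite_selects: "finite {ko. selects L ko}"
proof (rule finite_subset)
  show "{ko. selects L ko} \<subseteq> insert None (Some ` set L)"
    by (auto simp: selects_def split: option.splits)
qed simp

lemma tightest_exists: "\<exists>ko. tightest f L ko"
proof (cases "L = []")
  case True
  then have "tightest f L None" by (simp add: tightest_def selects_def)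
  then show ?thesis ..
next
  case False
  define M where "M = Max (f ` set L)"
  have M: "f c \<le> M" if "c \<in> set L" for c
    using that by (simp add: M_def)
  have "M \<in> f ` set L"
    unfolding M_def using False by simp
  then obtain k0 where k0: "k0 \<in> set L" "f k0 = M" by blast
  obtain k where k: "k \<in> set L" "f k = M" "\<forall>c\<in>set L. f c = M \<longrightarrow> strict c \<longrightarrow> strict k"
  proof (cases "\<exists>c\<in>set L. f c = M \<and> strict c")
    case True
    then obtain c where "c \<in> set L" "f c = M" "strict c" by blast
    then show thesis using that[of c] by blast
  next
    case False
    then show thesis using that[OF k0] by blast
  qed
  have "less_if (strict c \<and> \<not> strict k) (f c) (f k)" if "c \<in> set L" for c
  proof (cases "f c = M")
    case True
    then show ?thesis using k(2,3) that by (simp add: less_if_def)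
  next
    case False
    then show ?thesis using M[OF that] k(2) by (simp add: less_if_def)
  qed
  then have "tightest f L (Some k)"
    using k(1) by (simp add: tightest_def selects_def)
  then show ?thesis ..
qed

lemma fm_elim_sound:
  assumes sat: "\<forall>c\<in>set K. satisfies (Suc m) c i j W"
    and low: "tightest (\<lambda>c. sf_val m (bound m c) i j W) (lowers m K) ko"
    and up: "tightest (\<lambda>c. - sf_val m (bound m c) i j W) (uppers m K) lo"
  shows "\<forall>c\<in>set (fm_elim m K ko lo). satisfies m c i j W"
proof
  fix c assume "c \<in> set (fm_elim m K ko lo)"
  then consider
      "c \<in> set K" "sf_coeff (cform c) m = 0"
    | k c' where "ko = Some k" "c' \<in> set (lowers m K)" "c = bound_le m c' k (strict c' \<and> \<not> strict k)"
    | l c' where "lo = Some l" "c' \<in> set (uppers m K)" "c = bound_le m l c' (strict c' \<and> \<not> strict l)"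
    | k l where "ko = Some k" "lo = Some l" "c = bound_le m k l (strict k \<or> strict l)"
    unfolding fm_elim_def by (auto split: option.splits)
  then show "satisfies m c i j W"
  proof cases
    case 1
    then show ?thesis using sat satisfies_Suc_free by blast
  next
    case 2
    then show ?thesis using low by (simp add: tightest_def satisfies_bound_le)
  next
    case 3
    then show ?thesis using up by (simp add: tightest_def satisfies_bound_le)
  next
    case 4
    then have "k \<in> set (lowers m K)" "l \<in> set (uppers m K)"
      using low up by (simp_all add: tightest_def selects_def)
    then have "less_if (strict k) (sf_val m (bound m k) i j W) (W m)"
      and "less_if (strict l) (W m) (sf_val m (bound m l) i j W)"
      using sat satisfies_Suc_lower[of k m] satisfies_Suc_upper[of l m]
      by (auto simp: lowers_def uppers_def)
    then show ?thesis
      unfolding 4 satisfies_bound_le by (rule less_if_trans) simp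
  qed
qed

lemma fm_point_between:
  assumes sat: "\<forall>c\<in>set (fm_elim m K ko lo). satisfies m c i j W"
    and Wm: "W m = sf_val m (fm_point m ko lo) i j W"
  shows "\<forall>k\<in>set_option ko. less_if (strict k) (sf_val m (bound m k) i j W) (W m)"
    and "\<forall>l\<in>set_option lo. less_if (strict l) (W m) (sf_val m (bound m l) i j W)"
proof -
  have kl: "less_if (strict k \<or> strict l) (sf_val m (bound m k) i j W) (sf_val m (bound m l) i j W)"
    if "ko = Some k" "lo = Some l" for k l
    using sat that by (simp add: fm_elim_def satisfies_bound_le)
  show "\<forall>k\<in>set_option ko. less_if (strict k) (sf_val m (bound m k) i j W) (W m)"
  proof
    fix k assume k: "k \<in> set_option ko"
    show "less_if (strict k) (sf_val m (bound m k) i j W) (W m)"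
    proof (cases lo)
      case None
      then show ?thesis using k Wm by (auto simp: fm_point_def sf_val_comb less_if_def)
    next
      case (Some l)
      then show ?thesis using k Wm kl[of k l] by (auto simp: fm_point_def sf_val_comb less_if_def split: if_splits)
    qed
  qed
  show "\<forall>l\<in>set_option lo. less_if (strict l) (W m) (sf_val m (bound m l) i j W)"
  proof
    fix l assume l: "l \<in> set_option lo"
    show "less_if (strict l) (W m) (sf_val m (bound m l) i j W)"
    proof (cases ko)
      case None
      then show ?thesis using l Wm by (auto simp: fm_point_def sf_val_comb less_if_def)
    next
      case (Some k)
      then show ?thesis using l Wm kl[of k l] by (auto simp: fm_point_def sf_val_comb less_if_def split: if_splits)
    qed
  qed
qed

lemma fm_elim_lift:
  assumes sat: "\<forall>c\<in>set (fm_elim m K ko lo). satisfies m c i j W"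
    and low: "selects (lowers m K) ko" and up: "selects (uppers m K) lo"
    and Wm: "W m = sf_val m (fm_point m ko lo) i j W"
  shows "\<forall>c\<in>set K. satisfies (Suc m) c i j W"
proof
  fix c assume c: "c \<in> set K"
  consider "sf_coeff (cform c) m = 0" | "sf_coeff (cform c) m < 0" | "sf_coeff (cform c) m > 0"
    by linarith
  then show "satisfies (Suc m) c i j W"
  proof cases
    case 1
    then show ?thesis using sat c by (simp add: fm_elim_def satisfies_Suc_free)
  next
    case 2
    then have "c \<in> set (lowers m K)" using c by (simp add: lowers_def)
    then obtain k where k: "ko = Some k"
      using low by (cases ko) (auto simp: selects_def)
    with \<open>c \<in> set (lowers m K)\<close> have "bound_le m c k (strict c \<and> \<not> strict k) \<in> set (fm_elim m K ko lo)"
      by (simp add: fm_elim_def)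
    then have "less_if (strict c \<and> \<not> strict k) (sf_val m (bound m c) i j W) (sf_val m (bound m k) i j W)"
      using sat satisfies_bound_le by blast
    moreover have "less_if (strict k) (sf_val m (bound m k) i j W) (W m)"
      using fm_point_between(1)[OF sat Wm] k by simp
    ultimately show ?thesis
      unfolding satisfies_Suc_lower[OF 2] by (rule less_if_trans) simp
  next
    case 3
    then have "c \<in> set (uppers m K)" using c by (simp add: uppers_def)
    then obtain l where l: "lo = Some l"
      using up by (cases lo) (auto simp: selects_def)
    with \<open>c \<in> set (uppers m K)\<close> have "bound_le m l c (strict c \<and> \<not> strict l) \<in> set (fm_elim m K ko lo)"
      by (simp add: fm_elim_def)
    then have cl: "less_if (strict c \<and> \<not> strict l) (sf_val m (bound m l) i j W) (sf_val m (bound m c) i j W)"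
      using sat satisfies_bound_le by blast
    have "less_if (strict l) (W m) (sf_val m (bound m l) i j W)"
      using fm_point_between(2)[OF sat Wm] l by simp
    from less_if_trans[OF this cl, of "strict c"] show ?thesis
      unfolding satisfies_Suc_upper[OF 3] by simp
  qed
qed

lemma fm_elim_homogeneous:
  assumes "infinite S"
    and "\<And>i j. i \<in> S \<Longrightarrow> j \<in> S \<Longrightarrow> i < j \<Longrightarrow> \<exists>W. \<forall>c\<in>set K. satisfies (Suc m) c i j W"
  obtains Y ko lo where "Y \<subseteq> S" "infinite Y" "selects (lowers m K) ko" "selects (uppers m K) lo"
    "\<And>i j. i \<in> Y \<Longrightarrow> j \<in> Y \<Longrightarrow> i < j \<Longrightarrow> \<exists>W. \<forall>c\<in>set (fm_elim m K ko lo). satisfies m c i j W"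
proof -
  define C where "C = {ko. selects (lowers m K) ko} \<times> {lo. selects (uppers m K) lo}"
  have fin: "finite C"
    unfolding C_def using finite_selects by blast
  define good where "good i j t \<longleftrightarrow> (\<exists>W. (\<forall>c\<in>set K. satisfies (Suc m) c i j W)
    \<and> tightest (\<lambda>c. sf_val m (bound m c) i j W) (lowers m K) (fst t)
    \<and> tightest (\<lambda>c. - sf_val m (bound m c) i j W) (uppers m K) (snd t))" for i j t
  have ex: "\<exists>t\<in>C. good i j t" if ij: "i \<in> S" "j \<in> S" "i < j" for i j
  proof -
    obtain W where W: "\<forall>c\<in>set K. satisfies (Suc m) c i j W"
      using assms(2)[OF ij] by blast
    obtain ko lo where "tightest (\<lambda>c. sf_val m (bound m c) i j W) (lowers m K) ko"
      and "tightest (\<lambda>c. - sf_val m (bound m c) i j W) (uppers m K) lo"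
      using tightest_exists by metis
    then show ?thesis
      using W unfolding C_def good_def tightest_def by force
  qed
  obtain Y t where Y: "Y \<subseteq> S" "infinite Y" "t \<in> C"
    and hom: "\<And>i j. i \<in> Y \<Longrightarrow> j \<in> Y \<Longrightarrow> i < j \<Longrightarrow> good i j t"
    using ramsey_pairs[where P = good, OF assms(1) fin ex] by blast
  show thesis
  proof (rule that[OF Y(1,2)])
    show "selects (lowers m K) (fst t)" "selects (uppers m K) (snd t)"
      using Y(3) unfolding C_def by auto
    show "\<exists>W. \<forall>c\<in>set (fm_elim m K (fst t) (snd t)). satisfies m c i j W"
      if "i \<in> Y" "j \<in> Y" "i < j" for i j
      using hom[OF that] fm_elim_sound unfolding good_def by blast
  qed
qed

definition left_ext :: "nat \<Rightarrow> sform \<Rightarrow> (nat \<Rightarrow> nat \<Rightarrow> real) \<Rightarrow> nat \<Rightarrow> nat \<Rightarrow> real" where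
  "left_ext m f p i = (p i)(m := sf_left f i + (\<Sum>l<m. sf_coeff f l * p i l))"

definition right_ext :: "nat \<Rightarrow> sform \<Rightarrow> (nat \<Rightarrow> nat \<Rightarrow> real) \<Rightarrow> nat \<Rightarrow> nat \<Rightarrow> real" where
  "right_ext m f q j = (q j)(m := sf_right f j + (\<Sum>l<m. sf_coeff f l * q j l))"

lemma sf_val_ext:
  "left_ext m f p i m + right_ext m f q j m = sf_val m f i j (\<lambda>l. left_ext m f p i l + right_ext m f q j l)"
proof -
  have "left_ext m f p i m + right_ext m f q j m = sf_val m f i j (\<lambda>l. p i l + q j l)"
    by (simp add: left_ext_def right_ext_def sf_val_separated)
  also have "\<dots> = sf_val m f i j (\<lambda>l. left_ext m f p i l + right_ext m f q j l)"
    by (rule sf_val_cong) (simp add: left_ext_def right_ext_def)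
  finally show ?thesis .
qed

text \<open>Since \<open>fm_point\<close> is an affine combination of bounds, extending separated solutions of the
  eliminated system by its value yields separated solutions of the original one.\<close>

lemma fm_elim_lift_separated:
  assumes sat: "\<forall>c\<in>set (fm_elim m K ko lo). satisfies m c i j (\<lambda>l. p i l + q j l)"
    and "selects (lowers m K) ko" "selects (uppers m K) lo"
  defines "pt \<equiv> fm_point m ko lo"
  shows "\<forall>c\<in>set K. satisfies (Suc m) c i j (\<lambda>l. left_ext m pt p i l + right_ext m pt q j l)"
proof (rule fm_elim_lift[OF _ assms(2,3)])
  have "satisfies m c i j (\<lambda>l. left_ext m pt p i l + right_ext m pt q j l)
      \<longleftrightarrow> satisfies m c i j (\<lambda>l. p i l + q j l)" for c
    by (rule satisfies_cong) (simp add: left_ext_def right_ext_def)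
  then show "\<forall>c\<in>set (fm_elim m K ko lo). satisfies m c i j (\<lambda>l. left_ext m pt p i l + right_ext m pt q j l)"
    using sat by simp
  show "left_ext m pt p i m + right_ext m pt q j m
      = sf_val m (fm_point m ko lo) i j (\<lambda>l. left_ext m pt p i l + right_ext m pt q j l)"
    unfolding pt_def by (rule sf_val_ext)
qed

lemma separated_solutions:
  assumes "infinite S"
    and "\<And>i j. i \<in> S \<Longrightarrow> j \<in> S \<Longrightarrow> i < j \<Longrightarrow> \<exists>W. \<forall>c\<in>set K. satisfies m c i j W"
  obtains S' p q where "S' \<subseteq> S" "infinite S'"
    "\<And>i j. i \<in> S' \<Longrightarrow> j \<in> S' \<Longrightarrow> i < j \<Longrightarrow> \<forall>c\<in>set K. satisfies m c i j (\<lambda>l. p i l + q j l)"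
  using assms
proof (induction m arbitrary: K S thesis)
  case 0
  have "satisfies 0 c i j W \<longleftrightarrow> satisfies 0 c i j W'" for c i j W W'
    by (rule satisfies_cong) simp
  then show ?case
    using "0.prems"(3) by (intro "0.prems"(1)[OF order_refl "0.prems"(2), of "\<lambda>_ _. 0" "\<lambda>_ _. 0"]) blast
next
  case (Suc m)
  obtain Y ko lo where Y: "Y \<subseteq> S" "infinite Y"
    and bounds: "selects (lowers m K) ko" "selects (uppers m K) lo"
    and elim_sat: "\<And>i j. i \<in> Y \<Longrightarrow> j \<in> Y \<Longrightarrow> i < j \<Longrightarrow>
      \<exists>W. \<forall>c\<in>set (fm_elim m K ko lo). satisfies m c i j W"
    using fm_elim_homogeneous[OF Suc.prems(2,3)] by blast
  obtain S' p q where S': "S' \<subseteq> Y" "infinite S'"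
    and sat: "\<And>i j. i \<in> S' \<Longrightarrow> j \<in> S' \<Longrightarrow> i < j \<Longrightarrow>
      \<forall>c\<in>set (fm_elim m K ko lo). satisfies m c i j (\<lambda>l. p i l + q j l)"
    using Suc.IH[OF _ Y(2) elim_sat] by blast
  show ?case
  proof (rule Suc.prems(1))
    show "S' \<subseteq> S" using S'(1) Y(1) by blast
    show "infinite S'" by (rule S'(2))
    show "\<forall>c\<in>set K. satisfies (Suc m) c i j
        (\<lambda>l. left_ext m (fm_point m ko lo) p i l + right_ext m (fm_point m ko lo) q j l)"
      if "i \<in> S'" "j \<in> S'" "i < j" for i j
      using fm_elim_lift_separated[where p = p and q = q, OF sat[OF that] bounds] by simp
  qed
qed

definition sign_vector :: "nat \<Rightarrow> sform list \<Rightarrow> nat \<Rightarrow> nat \<Rightarrow> (nat \<Rightarrow> real) \<Rightarrow> real list" where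
  "sign_vector m fs i j W = map (\<lambda>f. sgn (sf_val m f i j W)) fs"

definition sign_constrs :: "sform \<Rightarrow> real \<Rightarrow> constr list" where
  "sign_constrs f \<sigma> =
     (if \<sigma> < 0 then [Constr f True]
      else if \<sigma> = 0 then [Constr f False, Constr (sf_comb (- 1) f 0 f 0) False]
      else [Constr (sf_comb (- 1) f 0 f 0) True])"

lemma satisfies_sign_constrs:
  assumes "\<sigma> \<in> {- 1, 0, 1}"
  shows "(\<forall>c\<in>set (sign_constrs f \<sigma>). satisfies m c i j W) \<longleftrightarrow> sgn (sf_val m f i j W) = \<sigma>"
  using assms by (auto simp: sign_constrs_def satisfies_def less_if_def sf_val_comb sgn_if)

lemma satisfies_sign_pattern:
  assumes "length fs = length \<sigma>s" and "set \<sigma>s \<subseteq> {- 1, 0, 1}"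
  shows "(\<forall>c\<in>set (concat (map2 sign_constrs fs \<sigma>s)). satisfies m c i j W) \<longleftrightarrow>
    sign_vector m fs i j W = \<sigma>s"
  using assms
proof (induction fs \<sigma>s rule: list_induct2)
  case Nil
  then show ?case by (simp add: sign_vector_def)
next
  case (Cons f fs \<sigma> \<sigma>s)
  then show ?case
    using satisfies_sign_constrs[of \<sigma> f m i j W] by (auto simp: sign_vector_def)
qed

lemma separable_sign_pattern:
  assumes "infinite S"
    and "\<And>i j. i \<in> S \<Longrightarrow> j \<in> S \<Longrightarrow> i < j \<Longrightarrow> \<exists>W. Q (sign_vector m fs i j W)"
  obtains S' p q where "S' \<subseteq> S" "infinite S'"
    "\<And>i j. i \<in> S' \<Longrightarrow> j \<in> S' \<Longrightarrow> i < j \<Longrightarrow> Q (sign_vector m fs i j (\<lambda>l. p i l + q j l))"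
proof -
  define C where "C = {\<sigma>s. set \<sigma>s \<subseteq> {- 1, 0, 1 :: real} \<and> length \<sigma>s = length fs}"
  have fin: "finite C"
    unfolding C_def by (rule finite_lists_length_eq) simp
  define good where "good i j \<sigma>s \<longleftrightarrow> Q \<sigma>s \<and> (\<exists>W. sign_vector m fs i j W = \<sigma>s)" for i j \<sigma>s
  have ex: "\<exists>\<sigma>s\<in>C. good i j \<sigma>s"
    if ij: "i \<in> S" "j \<in> S" "i < j" for i j
  proof -
    obtain W where "Q (sign_vector m fs i j W)" using assms(2)[OF ij] by blast
    moreover have "sign_vector m fs i j W \<in> C"
      by (auto simp: C_def sign_vector_def sgn_if)
    ultimately show ?thesis unfolding good_def by blast
  qed
  obtain Y \<sigma>s where Y: "Y \<subseteq> S" "infinite Y" "\<sigma>s \<in> C"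
    and hom: "\<And>i j. i \<in> Y \<Longrightarrow> j \<in> Y \<Longrightarrow> i < j \<Longrightarrow> good i j \<sigma>s"
    using ramsey_pairs[where P = good, OF assms(1) fin ex] by blast
  have \<sigma>s: "length fs = length \<sigma>s" "set \<sigma>s \<subseteq> {- 1, 0, 1}"
    using Y(3) by (auto simp: C_def)
  have pattern_sat: "\<exists>W. \<forall>c\<in>set (concat (map2 sign_constrs fs \<sigma>s)). satisfies m c i j W"
    if "i \<in> Y" "j \<in> Y" "i < j" for i j
    using hom[OF that] satisfies_sign_pattern[OF \<sigma>s] unfolding good_def by blast
  obtain S' p q where S': "S' \<subseteq> Y" "infinite S'"
    and sat: "\<And>i j. i \<in> S' \<Longrightarrow> j \<in> S' \<Longrightarrow> i < j \<Longrightarrow>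
      \<forall>c\<in>set (concat (map2 sign_constrs fs \<sigma>s)). satisfies m c i j (\<lambda>l. p i l + q j l)"
    using separated_solutions[OF Y(2) pattern_sat] by blast
  show thesis
  proof (rule that)
    show "S' \<subseteq> S" using S'(1) Y(1) by blast
    show "infinite S'" by (rule S'(2))
    fix i j assume ij: "i \<in> S'" "j \<in> S'" "i < j"
    have "sign_vector m fs i j (\<lambda>l. p i l + q j l) = \<sigma>s"
      using sat[OF ij] satisfies_sign_pattern[OF \<sigma>s] by blast
    moreover have "Q \<sigma>s"
      using hom ij S'(1) unfolding good_def by blast
    ultimately show "Q (sign_vector m fs i j (\<lambda>l. p i l + q j l))" by simp
  qed
qed

primrec atoms :: "'v qf \<Rightarrow> ('v lterm \<times> 'v lterm) list" where
  "atoms (Less s t) = [(s, t)]"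
| "atoms (Equal s t) = [(s, t)]"
| "atoms (Neg f) = atoms f"
| "atoms (Conj f g) = atoms f @ atoms g"
| "atoms (Disj f g) = atoms f @ atoms g"

definition atom_sgn :: "('v \<Rightarrow> real) \<Rightarrow> 'v lterm \<times> 'v lterm \<Rightarrow> real" where
  "atom_sgn e a = sgn (teval e (fst a) - teval e (snd a))"

lemma qeval_cong_atom_sgn:
  "(\<forall>a\<in>set (atoms f). atom_sgn e a = atom_sgn e' a) \<Longrightarrow> qeval e f = qeval e' f"
proof (induction f)
  case (Less s t)
  then have "sgn (teval e s - teval e t) = sgn (teval e' s - teval e' t)"
    by (simp add: atom_sgn_def)
  then show ?case by (simp add: sgn_if split: if_splits)
next
  case (Equal s t)
  then have "sgn (teval e s - teval e t) = sgn (teval e' s - teval e' t)"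
    by (simp add: atom_sgn_def)
  then show ?case by (simp add: sgn_if split: if_splits)
qed auto

lemma atoms_tvars: "a \<in> set (atoms f) \<Longrightarrow> tvars (fst a) \<union> tvars (snd a) \<subseteq> qvars f"
  by (induction f) auto

lemma finite_qvars: "finite (qvars f)"
proof -
  have "finite (tvars t)" for t :: "'v lterm"
    by (induction t) auto
  then show ?thesis by (induction f) auto
qed

lemma teval_add: "teval (\<lambda>v. e1 v + e2 v) t = teval e1 t + teval e2 t - teval (\<lambda>_. 0) t"
proof (induction t)
  case (Add s t)
  then show ?case by (simp add: algebra_simps)
next
  case (Scale c t)
  then show ?case by (simp add: distrib_left right_diff_distrib)
qed simp_all

lemma teval_linear:
  assumes "\<And>v. v \<in> tvars t \<Longrightarrow> \<exists>\<gamma>. \<forall>W. E W v = (\<Sum>l<M. \<gamma> l * W l)"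
  shows "\<exists>\<gamma>. \<forall>W. teval (E W) t = teval (\<lambda>_. 0) t + (\<Sum>l<M. \<gamma> l * W l)"
  using assms
proof (induction t)
  case (Var v)
  then show ?case by simp
next
  case (Const c)
  show ?case by (intro exI[of _ "\<lambda>_. 0"]) simp
next
  case (Add s t)
  then obtain \<gamma>s \<gamma>t where
    "\<forall>W. teval (E W) s = teval (\<lambda>_. 0) s + (\<Sum>l<M. \<gamma>s l * W l)"
    "\<forall>W. teval (E W) t = teval (\<lambda>_. 0) t + (\<Sum>l<M. \<gamma>t l * W l)"
    by auto
  then show ?case
    by (intro exI[of _ "\<lambda>l. \<gamma>s l + \<gamma>t l"]) (simp add: distrib_right sum.distrib)
next
  case (Scale c t)
  then obtain \<gamma> where "\<forall>W. teval (E W) t = teval (\<lambda>_. 0) t + (\<Sum>l<M. \<gamma> l * W l)"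
    by auto
  then show ?case
    by (intro exI[of _ "\<lambda>l. of_rat c * \<gamma> l"]) (simp add: distrib_left sum_distrib_left mult.assoc)
qed

lemma atom_sgn_separated:
  fixes M :: nat
  assumes linear: "\<And>v. v \<in> qvars f \<Longrightarrow> \<exists>\<gamma>. \<forall>W. E W v = (\<Sum>l<M. \<gamma> l * W l)"
  obtains fs where
    "\<And>i j W. map (atom_sgn (\<lambda>v. L i v + R j v + E W v)) (atoms f) = sign_vector M fs i j W"
proof -
  have split: "teval (\<lambda>v. L i v + R j v + E W v) t
      = teval (L i) t + teval (R j) t + teval (E W) t - 2 * teval (\<lambda>_. 0) t" for i j W t
    using teval_add[of "\<lambda>v. L i v + R j v" "E W" t] teval_add[of "L i" "R j" t] by simp
  have "\<forall>a\<in>set (atoms f). \<exists>g. \<forall>i j W. atom_sgn (\<lambda>v. L i v + R j v + E W v) a = sgn (sf_val M g i j W)"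
  proof
    fix a assume a: "a \<in> set (atoms f)"
    have lin: "\<exists>\<gamma>. \<forall>W. teval (E W) t = teval (\<lambda>_. 0) t + (\<Sum>l<M. \<gamma> l * W l)"
      if "t = fst a \<or> t = snd a" for t
      by (rule teval_linear) (use linear atoms_tvars[OF a] that in blast)
    obtain \<gamma>s where \<gamma>s: "\<forall>W. teval (E W) (fst a) = teval (\<lambda>_. 0) (fst a) + (\<Sum>l<M. \<gamma>s l * W l)"
      using lin[of "fst a"] by blast
    obtain \<gamma>t where \<gamma>t: "\<forall>W. teval (E W) (snd a) = teval (\<lambda>_. 0) (snd a) + (\<Sum>l<M. \<gamma>t l * W l)"
      using lin[of "snd a"] by blast
    define g where "g = SForm
      (\<lambda>i. teval (L i) (fst a) - teval (L i) (snd a) - (teval (\<lambda>_. 0) (fst a) - teval (\<lambda>_. 0) (snd a)))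
      (\<lambda>j. teval (R j) (fst a) - teval (R j) (snd a)) (\<lambda>l. \<gamma>s l - \<gamma>t l)"
    have "teval (\<lambda>v. L i v + R j v + E W v) (fst a) - teval (\<lambda>v. L i v + R j v + E W v) (snd a)
        = sf_val M g i j W" for i j W
      unfolding split using \<gamma>s \<gamma>t
      by (simp add: g_def sf_val_def left_diff_distrib sum_subtractf)
    then show "\<exists>g. \<forall>i j W. atom_sgn (\<lambda>v. L i v + R j v + E W v) a = sgn (sf_val M g i j W)"
      by (intro exI[of _ g]) (simp add: atom_sgn_def)
  qed
  from bchoice[OF this] obtain G where
    "\<forall>a\<in>set (atoms f). \<forall>i j W. atom_sgn (\<lambda>v. L i v + R j v + E W v) a = sgn (sf_val M (G a) i j W)" ..
  then show thesis
    by (intro that[of "map G (atoms f)"]) (simp add: sign_vector_def)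
qed

lemma qf_separable_witnesses:
  fixes M :: nat and L R :: "nat \<Rightarrow> 'v \<Rightarrow> real"
  assumes linear: "\<And>v. v \<in> qvars f \<Longrightarrow> \<exists>\<gamma>. \<forall>W. E W v = (\<Sum>l<M. \<gamma> l * W l)"
    and "infinite S"
    and "\<And>i j. i \<in> S \<Longrightarrow> j \<in> S \<Longrightarrow> i < j \<Longrightarrow> \<exists>W. qeval (\<lambda>v. L i v + R j v + E W v) f"
  obtains S' p q where "S' \<subseteq> S" "infinite S'"
    "\<And>i j. i \<in> S' \<Longrightarrow> j \<in> S' \<Longrightarrow> i < j \<Longrightarrow> qeval (\<lambda>v. L i v + R j v + E (\<lambda>l. p i l + q j l) v) f"
proof -
  obtain fs where
    fs: "\<And>i j W. map (atom_sgn (\<lambda>v. L i v + R j v + E W v)) (atoms f) = sign_vector M fs i j W"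
    using atom_sgn_separated[where f = f and E = E and L = L and R = R, OF linear] by blast
  \<comment> \<open>The truth value of \<open>f\<close> depends only on the sign pattern of its atoms.\<close>
  define Q where "Q \<sigma>s \<longleftrightarrow> (\<exists>e. map (atom_sgn e) (atoms f) = \<sigma>s \<and> qeval e f)" for \<sigma>s
  have "Q (map (atom_sgn e) (atoms f)) \<longleftrightarrow> qeval e f" for e
  proof
    assume "Q (map (atom_sgn e) (atoms f))"
    then obtain e' where "map (atom_sgn e') (atoms f) = map (atom_sgn e) (atoms f)" "qeval e' f"
      by (auto simp: Q_def)
    then show "qeval e f"
      using qeval_cong_atom_sgn[of f e' e] by simp
  qed (auto simp: Q_def)
  then have Q: "Q (sign_vector M fs i j W) \<longleftrightarrow> qeval (\<lambda>v. L i v + R j v + E W v) f" for i j W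
    by (simp flip: fs)
  have "\<exists>W. Q (sign_vector M fs i j W)" if "i \<in> S" "j \<in> S" "i < j" for i j
    using assms(3)[OF that] by (simp add: Q)
  then obtain S' p q where "S' \<subseteq> S" "infinite S'"
    and "\<And>i j. i \<in> S' \<Longrightarrow> j \<in> S' \<Longrightarrow> i < j \<Longrightarrow> Q (sign_vector M fs i j (\<lambda>l. p i l + q j l))"
    using separable_sign_pattern[where Q = Q, OF assms(2)] by blast
  then show thesis
    using that by (simp add: Q) blast
qed

definition xz_env :: "real list \<Rightarrow> real list \<Rightarrow> var4 + nat \<Rightarrow> real" where
  "xz_env z x = case_sum (\<lambda>v. case v of VX l \<Rightarrow> comp x l | VZ l \<Rightarrow> comp z l | _ \<Rightarrow> 0) (\<lambda>_. 0)"

definition y_env :: "real list \<Rightarrow> var4 + nat \<Rightarrow> real" where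
  "y_env y = case_sum (\<lambda>v. case v of VY l \<Rightarrow> comp y l | _ \<Rightarrow> 0) (\<lambda>_. 0)"

text \<open>The witnesses \<open>w\<close> and the existentially quantified variables \<open>Inr k\<close> of \<open>\<phi>\<close> are
  packed into one vector: \<open>W l = w ! l\<close> for \<open>l < m\<close> and \<open>W (m + k)\<close> is the value of \<open>Inr k\<close>.\<close>

definition wit_env :: "nat \<Rightarrow> (nat \<Rightarrow> real) \<Rightarrow> var4 + nat \<Rightarrow> real" where
  "wit_env m W = case_sum (\<lambda>v. case v of VW l \<Rightarrow> if l < m then W l else 0 | _ \<Rightarrow> 0) (\<lambda>k. W (m + k))"

lemma env4_split:
  assumes "length w = m" "\<And>l. l < m \<Longrightarrow> w ! l = W l" "\<And>k. U k = W (m + k)"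
  shows "case_sum (env4 x y w z) U = (\<lambda>v. xz_env z x v + y_env y v + wit_env m W v)"
proof
  fix v
  show "case_sum (env4 x y w z) U v = xz_env z x v + y_env y v + wit_env m W v"
  proof (cases v)
    case (Inl a)
    then show ?thesis
      using assms by (cases a) (auto simp: xz_env_def y_env_def wit_env_def comp_def)
  next
    case (Inr k)
    then show ?thesis
      using assms by (simp add: xz_env_def y_env_def wit_env_def)
  qed
qed

lemma wit_env_linear:
  assumes "\<And>k. v = Inr k \<Longrightarrow> k < N"
  shows "\<exists>\<gamma>. \<forall>W. wit_env m W v = (\<Sum>l<m + N. \<gamma> l * W l)"
proof -
  have coordinate: "\<exists>\<gamma>. \<forall>W :: nat \<Rightarrow> real. W a = (\<Sum>l<m + N. \<gamma> l * W l)" if "a < m + N" for a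
  proof (intro exI[of _ "\<lambda>l. if l = a then 1 else 0"] allI)
    fix W :: "nat \<Rightarrow> real"
    have "(\<Sum>l<m + N. (if l = a then 1 else 0) * W l) = (\<Sum>l<m + N. if a = l then W l else 0)"
      by (rule sum.cong) auto
    also have "\<dots> = W a"
      using that by simp
    finally show "W a = (\<Sum>l<m + N. (if l = a then 1 else 0) * W l)" ..
  qed
  show ?thesis
  proof (cases v)
    case (Inl u)
    show ?thesis
    proof (cases "\<exists>l. u = VW l \<and> l < m")
      case True
      then obtain l where "u = VW l" "l < m" by blast
      then show ?thesis
        using coordinate[of l] by (simp add: Inl wit_env_def)
    next
      case False
      then have "wit_env m W v = 0" for W
        using Inl by (cases u) (auto simp: wit_env_def)
      then show ?thesis
        by (intro exI[of _ "\<lambda>_. 0"]) simp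
    qed
  next
    case (Inr k)
    then show ?thesis
      using coordinate[of "m + k"] assms by (simp add: wit_env_def)
  qed
qed

lemma exeval_env4_witness:
  assumes "length w = m" and "exeval (env4 x y w z) f"
  shows "\<exists>W. qeval (\<lambda>v. xz_env z x v + y_env y v + wit_env m W v) f"
proof -
  obtain U where U: "qeval (case_sum (env4 x y w z) U) f"
    using assms(2) by (auto simp: exeval_def)
  define W where "W l = (if l < m then w ! l else U (l - m))" for l
  have "case_sum (env4 x y w z) U = (\<lambda>v. xz_env z x v + y_env y v + wit_env m W v)"
    by (rule env4_split) (simp_all add: assms(1) W_def)
  then show ?thesis
    using U by auto
qed

lemma exeval_env4_of_witness:
  assumes "qeval (\<lambda>v. xz_env z x v + y_env y v + wit_env m W v) f"
  shows "exeval (env4 x y (map W [0..<m]) z) f"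
proof -
  have "case_sum (env4 x y (map W [0..<m]) z) (\<lambda>k. W (m + k))
      = (\<lambda>v. xz_env z x v + y_env y v + wit_env m W v)"
    by (rule env4_split) simp_all
  then show ?thesis
    unfolding exeval_def using assms by (intro exI[of _ "\<lambda>k. W (m + k)"]) simp
qed

lemma ram_ex_of_infinite_set:
  fixes S :: "nat set"
  assumes "infinite S" and "\<And>i. i \<in> S \<Longrightarrow> length (a i) = d" and "inj_on a S"
    and "\<And>i j. i \<in> S \<Longrightarrow> j \<in> S \<Longrightarrow> i < j \<Longrightarrow> P (a i) (a j)"
  shows "ram_ex d P"
proof -
  define r where "r = enumerate S"
  have r: "r k \<in> S" for k
    unfolding r_def by (rule enumerate_in_set[OF assms(1)])
  have mono: "strict_mono r"
    unfolding r_def by (rule strict_mono_enumerate[OF assms(1)])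
  have "inj_on a (range r)"
    using assms(3) range_enumerate[OF assms(1)] by (simp add: r_def)
  then have "inj (a \<circ> r)"
    by (rule comp_inj_on[OF strict_mono_imp_inj_on[OF mono]])
  then show ?thesis
    unfolding ram_ex_def using assms(2,4) r mono
    by (intro exI[of _ "a \<circ> r"]) (auto simp: strict_mono_less)
qed

lemma ram_ex_map:
  assumes "ram_ex d Q"
    and "\<And>a. length a = d \<Longrightarrow> length (g a) = d'"
    and "\<And>a b. length a = d \<Longrightarrow> length b = d \<Longrightarrow> Q a b \<Longrightarrow> P (g a) (g b) \<and> g a \<noteq> g b"
  shows "ram_ex d' P"
proof -
  obtain s :: "nat \<Rightarrow> real list" where s: "\<And>i. length (s i) = d" "\<And>i j. i < j \<Longrightarrow> Q (s i) (s j)"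
    using assms(1) unfolding ram_ex_def by blast
  have "inj (g \<circ> s)"
  proof (rule injI)
    fix i j assume "(g \<circ> s) i = (g \<circ> s) j"
    moreover have "g (s i') \<noteq> g (s j')" if "i' < j'" for i' j'
      using assms(3)[OF s(1) s(1) s(2)[OF that]] by blast
    ultimately show "i = j"
      by (metis comp_apply linorder_neq_iff)
  qed
  then show ?thesis
    unfolding ram_ex_def using assms(2,3) s by (intro exI[of _ "g \<circ> s"]) auto
qed

lemma ram_ex_of_separated_witnesses:
  fixes x :: "nat \<Rightarrow> real list"
  assumes "infinite S" and x_len: "\<And>i. length (x i) = n" and "inj x"
    and sep: "\<And>i j. i \<in> S \<Longrightarrow> j \<in> S \<Longrightarrow> i < j \<Longrightarrow>
      qeval (\<lambda>v. xz_env z (x i) v + y_env (x j) v + wit_env m (\<lambda>l. p i l + q j l) v) f"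
  shows "ram_ex (n + 2 * m) (\<lambda>a b.
    exeval (env4 (take n a) (take n b) (vadd (take m (drop n a)) (drop (n + m) b)) z) f
    \<and> take n a \<noteq> take n b)"
proof (rule ram_ex_of_infinite_set[OF \<open>infinite S\<close>])
  let ?a = "\<lambda>i. x i @ map (p i) [0..<m] @ map (q i) [0..<m]"
  show "length (?a i) = n + 2 * m" for i
    using x_len by simp
  show "inj_on ?a S"
  proof (rule inj_onI)
    fix i j assume "?a i = ?a j"
    then have "take n (?a i) = take n (?a j)" by (rule arg_cong)
    then have "x i = x j" using x_len by simp
    with \<open>inj x\<close> show "i = j" by (rule injD)
  qed
  fix i j assume ij: "i \<in> S" "j \<in> S" "i < j"
  have "vadd (take m (drop n (?a i))) (drop (n + m) (?a j)) = map (\<lambda>l. p i l + q j l) [0..<m]"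
    using x_len by (simp add: vadd_def zip_map_map zip_same_conv_map)
  moreover have "x i \<noteq> x j"
    using \<open>inj x\<close> \<open>i < j\<close> by (auto dest: injD)
  ultimately show "exeval (env4 (take n (?a i)) (take n (?a j))
      (vadd (take m (drop n (?a i))) (drop (n + m) (?a j))) z) f \<and> take n (?a i) \<noteq> take n (?a j)"
    using exeval_env4_of_witness[OF sep[OF ij]] x_len by simp
qed

lemma wit_env_linear_on_qvars:
  obtains N where "\<And>v. v \<in> qvars f \<Longrightarrow> \<exists>\<gamma>. \<forall>W. wit_env m W v = (\<Sum>l<m + N. \<gamma> l * W l)"
proof -
  have "finite (Inr -` qvars f :: nat set)"
    by (rule finite_vimageI[OF finite_qvars]) simp
  then obtain N where N: "\<forall>k\<in>Inr -` qvars f. k < N"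
    unfolding finite_nat_set_iff_bounded by blast
  show thesis
    by (rule that, rule wit_env_linear) (use N in auto)
qed

lemma ram_ex_forget_separated_witnesses:
  assumes "ram_ex (n + 2 * m) (\<lambda>a b.
    exeval (env4 (take n a) (take n b) (vadd (take m (drop n a)) (drop (n + m) b)) z) f
    \<and> take n a \<noteq> take n b)"
  shows "ram_ex n (\<lambda>x y. \<exists>w. length w = m \<and> exeval (env4 x y w z) f)"
  using assms
proof (rule ram_ex_map[where g = "take n"])
  fix a b :: "real list"
  assume len: "length a = n + 2 * m" "length b = n + 2 * m"
    and ab: "exeval (env4 (take n a) (take n b) (vadd (take m (drop n a)) (drop (n + m) b)) z) f
      \<and> take n a \<noteq> take n b"
  have "length (vadd (take m (drop n a)) (drop (n + m) b)) = m"
    using len by (simp add: vadd_def)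
  with ab show "(\<exists>w. length w = m \<and> exeval (env4 (take n a) (take n b) w z) f) \<and> take n a \<noteq> take n b"
    by blast
qed simp

theorem mainTheorem5:
  fixes n m p :: nat and \<phi> :: "var4 exfm" and z :: "real list"
  assumes "wf4 n m p \<phi>" and "length z = p"
  shows "ram_ex n (\<lambda>x y. \<exists>w. length w = m \<and> exeval (env4 x y w z) \<phi>)
     \<longleftrightarrow> ram_ex (n + 2 * m) (\<lambda>a b.
            exeval (env4 (take n a) (take n b)
                         (vadd (take m (drop n a)) (drop (n + m) b)) z) \<phi>
            \<and> take n a \<noteq> take n b)"
proof
  assume "ram_ex n (\<lambda>x y. \<exists>w. length w = m \<and> exeval (env4 x y w z) \<phi>)"
  then obtain x :: "nat \<Rightarrow> real list" where x_len: "\<And>i. length (x i) = n" and "inj x"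
    and x_pairs: "\<And>i j. i < j \<Longrightarrow> \<exists>w. length w = m \<and> exeval (env4 (x i) (x j) w z) \<phi>"
    unfolding ram_ex_def by blast
  obtain N where linear:
    "\<And>v. v \<in> qvars \<phi> \<Longrightarrow> \<exists>\<gamma>. \<forall>W. wit_env m W v = (\<Sum>l<m + N. \<gamma> l * W l)"
    using wit_env_linear_on_qvars[of \<phi> m] by blast
  have wit: "\<exists>W. qeval (\<lambda>v. xz_env z (x i) v + y_env (x j) v + wit_env m W v) \<phi>"
    if "i \<in> UNIV" "j \<in> UNIV" "i < j" for i j
    using x_pairs[OF \<open>i < j\<close>] exeval_env4_witness by blast
  obtain S p q where "infinite S" and sep: "\<And>i j. i \<in> S \<Longrightarrow> j \<in> S \<Longrightarrow> i < j \<Longrightarrow>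
      qeval (\<lambda>v. xz_env z (x i) v + y_env (x j) v + wit_env m (\<lambda>l. p i l + q j l) v) \<phi>"
    using qf_separable_witnesses[where L = "\<lambda>i. xz_env z (x i)" and R = "\<lambda>j. y_env (x j)"
        and E = "wit_env m" and M = "m + N" and f = \<phi>, OF linear infinite_UNIV_nat wit, simplified]
    by blast
  then show "ram_ex (n + 2 * m) (\<lambda>a b.
      exeval (env4 (take n a) (take n b) (vadd (take m (drop n a)) (drop (n + m) b)) z) \<phi>
      \<and> take n a \<noteq> take n b)"
    by (rule ram_ex_of_separated_witnesses[OF _ x_len \<open>inj x\<close>])
qed (rule ram_ex_forget_separated_witnesses)

end
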